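(* Let $x,y,z$ be real numbers with $0<x\le y\le z\le 1$, and let $$f(x,y,z)=x^{y}\,y^{-x}\,z^{x}\,x^{-z}\,y^{z}\,z^{-y}.$$ Then $f(x,y,z)\ge 1$, and equality $f(x,y,z)=1$ is possible only when $x=y$ or $y=z$. *)

theory Defs
  imports Complex_Main
begin

definition fxyz :: "real \<Rightarrow> real \<Rightarrow> real \<Rightarrow> real" where
  "fxyz x y z = x powr y * y powr (- x) * z powr x * x powr (- z) * y powr z * z powr (- y)"

end

theory Submission
  imports Defs
begin

text \<open>Taking logarithms, \<open>ln (fxyz x y z) = (z - y) (ln y - ln x) - (y - x) (ln z - ln y)\<close>.
  By concavity of \<open>ln\<close>, its chord slope on \<open>[x, y]\<close> is at least \<open>1 / y\<close> and its chord slope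
  on \<open>[y, z]\<close> is at most \<open>1 / y\<close>, so this quantity is nonnegative, and strictly positive
  when \<open>x < y < z\<close>.\<close>

lemma fxyz_eq_exp:
  assumes "0 < x" "0 < y" "0 < z"
  shows "fxyz x y z = exp ((z - y) * (ln y - ln x) - (y - x) * (ln z - ln y))"
proof -
  have "fxyz x y z = exp (y * ln x) * exp (- x * ln y) * exp (x * ln z) * exp (- z * ln x)
      * exp (z * ln y) * exp (- y * ln z)"
    unfolding fxyz_def using assms by (simp add: powr_def mult.commute)
  also have "\<dots> = exp (y * ln x + - x * ln y + x * ln z + - z * ln x + z * ln y + - y * ln z)"
    by (simp only: exp_add)
  also have "y * ln x + - x * ln y + x * ln z + - z * ln x + z * ln y + - y * ln z
      = (z - y) * (ln y - ln x) - (y - x) * (ln z - ln y)"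
    by (simp add: algebra_simps)
  finally show ?thesis .
qed

lemma ln_chord_slopes_le:
  fixes x y z :: real
  assumes "0 < x" "x \<le> y" "y \<le> z"
  shows "(y - x) * (ln z - ln y) \<le> (z - y) * (ln y - ln x)"
proof -
  have "(y - x) * (ln z - ln y) \<le> (y - x) * ((z - y) / y)"
    using ln_diff_le[of z y] assms by (intro mult_left_mono) auto
  also have "\<dots> = (z - y) * ((y - x) / y)"
    by simp
  also have "\<dots> \<le> (z - y) * (ln y - ln x)"
    using ln_diff_le[of x y] assms by (intro mult_left_mono) (auto simp: field_simps)
  finally show ?thesis .
qed

lemma ln_chord_slopes_less:
  fixes x y z :: real
  assumes "0 < x" "x < y" "y < z"
  shows "(y - x) * (ln z - ln y) < (z - y) * (ln y - ln x)"
proof -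
  have "(y - x) * (ln z - ln y) < (y - x) * ((z - y) / y)"
    using ln_diff_less[of z y] assms by (intro mult_strict_left_mono) auto
  also have "\<dots> = (z - y) * ((y - x) / y)"
    by simp
  also have "\<dots> < (z - y) * (ln y - ln x)"
    using ln_diff_less[of x y] assms by (intro mult_strict_left_mono) (auto simp: field_simps)
  finally show ?thesis .
qed

theorem lemma2:
  fixes x y z :: real
  assumes "0 < x" "x \<le> y" "y \<le> z" "z \<le> 1"
  shows "fxyz x y z \<ge> 1 \<and> (fxyz x y z = 1 \<longrightarrow> x = y \<or> y = z)"
proof -
  define L where "L = (z - y) * (ln y - ln x) - (y - x) * (ln z - ln y)"
  have f_eq: "fxyz x y z = exp L"
    unfolding L_def using assms by (intro fxyz_eq_exp) auto
  have "L \<ge> 0"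
    unfolding L_def using ln_chord_slopes_le[OF assms(1-3)] by simp
  moreover have "L > 0" if "x < y" "y < z"
    unfolding L_def using ln_chord_slopes_less[OF assms(1) that] by simp
  ultimately show ?thesis
    using f_eq assms(2,3) by (auto simp: order_le_less)
qed

end
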